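(* Let $k=3$, $t\ge 2$, $d=2^t-1$, $n\ge d$ and $j=n-d$. Then in $\mathbb{F}_2[w_2,w_3]$, \[ r_{j-1}q_n+w_3r_{j-2}q_{n-1}+r_jq_{n-2}=0, \] a homogeneous relation of degree $(d-2)+3j$.
   Context: In $\mathbb{F}_2[w_2,w_3]$ ($\deg w_2=2,\deg w_3=3$): $q_0=1$, $q_m=0$ for $m<0$, $q_m=w_2q_{m-2}+w_3q_{m-3}$ for $m\ge1$; and $r_0=1$, $r_m=0$ for $m<0$, $r_{m+1}=w_2r_m+w_3^2r_{m-2}$ for $m\ge 0$ (so $\deg r_m=2m$). *)

theory Defs
  imports "HOL-Computational_Algebra.Polynomial" "HOL-Library.Z2"
begin

text \<open>F_2[w2,w3] is modelled as (bit poly) poly: the outer variable is w3,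
  coefficients are polynomials over F_2 = bit in the variable w2.\<close>

type_synonym F2w = "bit poly poly"

definition w2 :: F2w where "w2 = [:[:0, 1:]:]"
definition w3 :: F2w where "w3 = [:0, 1:]"

text \<open>q_0 = 1, q_m = 0 for m<0, q_m = w2 q_(m-2) + w3 q_(m-3) for m \<ge> 1
  (so q_1 = 0, q_2 = w2).\<close>
fun qN :: "nat \<Rightarrow> F2w" where
  "qN 0 = 1"
| "qN (Suc 0) = 0"
| "qN (Suc (Suc 0)) = w2 * qN 0"
| "qN (Suc (Suc (Suc m))) = w2 * qN (Suc m) + w3 * qN m"

definition q :: "int \<Rightarrow> F2w" where
  "q m = (if m < 0 then 0 else qN (nat m))"

text \<open>r_0 = 1, r_m = 0 for m<0, r_(m+1) = w2 r_m + w3^2 r_(m-2) for m \<ge> 0.\<close>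
fun rN :: "nat \<Rightarrow> F2w" where
  "rN 0 = 1"
| "rN (Suc 0) = w2 * rN 0"
| "rN (Suc (Suc 0)) = w2 * rN (Suc 0)"
| "rN (Suc (Suc (Suc m))) = w2 * rN (Suc (Suc m)) + w3^2 * rN m"

definition r :: "int \<Rightarrow> F2w" where
  "r m = (if m < 0 then 0 else rN (nat m))"

end

theory Submission
  imports Defs
begin

text \<open>Put E(j, N) = r(j-1) q(N) + w3 r(j-2) q(N-1) + r(j) q(N-2). Expanding r(j+1) and
  q(N) by their recurrences, the two terms w2 r(j) q(N-2) cancel in characteristic 2, leaving
  E(j+1, N) = w3 E(j, N-1); hence E(j, N) = w3^j q(N-j-2). For N = n and j = n - d the index
  is d - 2 = 2^t - 3. Since squaring is additive in characteristic 2, the recurrence for q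
  gives the doubling formula q(2k+1) = w3 q(k-1)^2, so q(2^(t+1) - 3) = w3 q(2^t - 3)^2, and
  q(1) = 0 starts an induction showing q(2^t - 3) = 0.\<close>

lemma add_self_eq_zero_if_two_eq_zero:
  fixes x :: "'a::semiring_1"
  assumes "(2::'a) = 0"
  shows "x + x = 0"
  by (metis assms mult_2 mult_zero_left)

lemma power2_add_if_two_eq_zero:
  fixes a b :: "'a::comm_semiring_1"
  assumes "(2::'a) = 0"
  shows "(a + b)^2 = a^2 + b^2"
proof -
  have "(a + b)^2 = a^2 + b^2 + (a * b + a * b)"
    by (simp add: power2_eq_square algebra_simps)
  then show ?thesis
    by (simp add: add_self_eq_zero_if_two_eq_zero[OF assms])
qed

lemma F2w_two_eq_zero: "(2::F2w) = 0"
proof -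
  have "(1::F2w) + 1 = 0"
    by (simp add: one_pCons)
  then show ?thesis
    by (simp add: one_add_one)
qed

lemma F2w_add_self: "(x::F2w) + x = 0"
  by (rule add_self_eq_zero_if_two_eq_zero[OF F2w_two_eq_zero])

lemma F2w_power2_add: "((a::F2w) + b)^2 = a^2 + b^2"
  by (rule power2_add_if_two_eq_zero[OF F2w_two_eq_zero])

lemma q_of_nat: "q (int k) = qN k"
  by (simp add: q_def)

lemma r_of_nat: "r (int k) = rN k"
  by (simp add: r_def)

lemma q_rec:
  assumes "m \<noteq> 0"
  shows "q m = w2 * q (m - 2) + w3 * q (m - 3)"
proof -
  consider "m < 0" | "m = 1" | "m = 2" | "m \<ge> 3"
    using assms by linarith
  then show ?thesis
  proof cases
    case 4
    define k where "k = nat (m - 3)"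
    then have "m = int (Suc (Suc (Suc k)))" "m - 2 = int (Suc k)" "m - 3 = int k"
      using 4 by auto
    then show ?thesis
      by (simp only: q_of_nat qN.simps)
  qed (simp_all add: q_def numeral_2_eq_2)
qed

lemma r_rec:
  assumes "m \<ge> 0"
  shows "r (m + 1) = w2 * r m + w3^2 * r (m - 2)"
proof -
  obtain k where k: "m = int k"
    using assms nonneg_int_cases by blast
  consider "k = 0" | "k = 1" | k' where "k = Suc (Suc k')"
    by (metis One_nat_def not0_implies_Suc)
  then show ?thesis
  proof cases
    case 3
    then have "m + 1 = int (Suc (Suc (Suc k')))" "m = int (Suc (Suc k'))" "m - 2 = int k'"
      using k by auto
    then show ?thesis
      by (simp only: r_of_nat rN.simps)
  qed (use k in \<open>simp_all add: r_def numeral_2_eq_2\<close>)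
qed

lemma r_q_combination_eq:
  assumes "N - int j \<ge> 1"
  shows "r (int j - 1) * q N + w3 * r (int j - 2) * q (N - 1) + r (int j) * q (N - 2)
       = w3^j * q (N - int j - 2)"
  using assms
proof (induction j arbitrary: N)
  case 0
  then show ?case by (simp add: r_def)
next
  case (Suc j)
  have "1 \<le> (N - 1) - int j"
    using Suc.prems by simp
  from Suc.IH[OF this]
  have IH: "r (int j - 1) * q (N - 1) + w3 * r (int j - 2) * q (N - 2) + r (int j) * q (N - 3)
          = w3^j * q (N - int (Suc j) - 2)"
    by (simp add: algebra_simps)
  have r_step: "r (int j + 1) = w2 * r (int j) + w3^2 * r (int j - 2)"
    using r_rec[of "int j"] by simp
  have q_step: "q N = w2 * q (N - 2) + w3 * q (N - 3)"
    using q_rec[of N] Suc.prems by simp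
  have "r (int (Suc j) - 1) * q N + w3 * r (int (Suc j) - 2) * q (N - 1)
          + r (int (Suc j)) * q (N - 2)
      = r (int j) * (w2 * q (N - 2) + w3 * q (N - 3)) + w3 * r (int j - 1) * q (N - 1)
          + (w2 * r (int j) + w3^2 * r (int j - 2)) * q (N - 2)"
    using r_step q_step by (simp add: algebra_simps)
  also have "\<dots> = w3 * (r (int j - 1) * q (N - 1) + w3 * r (int j - 2) * q (N - 2) + r (int j) * q (N - 3))
          + (w2 * r (int j) * q (N - 2) + w2 * r (int j) * q (N - 2))"
    by (simp add: algebra_simps power2_eq_square)
  also have "\<dots> = w3^Suc j * q (N - int (Suc j) - 2)"
    by (simp add: IH F2w_add_self)
  finally show ?case .
qed

lemma q_double:
  "q (2 * int k) = q (int k)^2 + w2 * q (int k - 1)^2 \<and>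
   q (2 * int k + 1) = w3 * q (int k - 1)^2"
proof -
  let ?P = "\<lambda>k::int. q (2 * k) = q k^2 + w2 * q (k - 1)^2 \<and> q (2 * k + 1) = w3 * q (k - 1)^2"
  have "?P (int k) \<and> ?P (int k + 1)"
  proof (induction k)
    case 0
    have "q 0 = 1" "q 1 = 0" "q 2 = w2" "q 3 = w3"
      by (simp_all add: q_def numeral_2_eq_2 numeral_3_eq_3)
    then show ?case
      by (simp add: q_def)
  next
    case (Suc k)
    let ?k = "int k"
    have even: "q (2 * ?k + 2) = q (?k + 1)^2 + w2 * q ?k^2"
      and odd: "q (2 * ?k + 3) = w3 * q ?k^2" "q (2 * ?k + 1) = w3 * q (?k - 1)^2"
      using Suc.IH by (simp_all add: algebra_simps)
    have q_2k4: "q (2 * ?k + 4) = w2 * q (2 * ?k + 2) + w3 * q (2 * ?k + 1)"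
      and q_2k5: "q (2 * ?k + 5) = w2 * q (2 * ?k + 3) + w3 * q (2 * ?k + 2)"
      and q_k2: "q (?k + 2) = w2 * q ?k + w3 * q (?k - 1)"
      using q_rec[of "2 * ?k + 4"] q_rec[of "2 * ?k + 5"] q_rec[of "?k + 2"]
      by (simp_all add: algebra_simps)
    have "q (2 * ?k + 4) = q (?k + 2)^2 + w2 * q (?k + 1)^2"
      unfolding q_2k4 even odd q_k2 F2w_power2_add
      by (simp add: algebra_simps power2_eq_square)
    moreover have "q (2 * ?k + 5) = w3 * q (?k + 1)^2 + (w2 * w3 * q ?k^2 + w2 * w3 * q ?k^2)"
      unfolding q_2k5 even odd by (simp add: algebra_simps)
    ultimately show ?case
      using Suc.IH by (simp add: algebra_simps F2w_add_self)
  qed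
  then show ?thesis by blast
qed

lemma q_two_power_minus_three:
  assumes "t \<ge> 2"
  shows "q (2^t - 3) = 0"
  using assms
proof (induction t rule: dec_induct)
  case base
  then show ?case by (simp add: q_def)
next
  case (step t)
  have "(2::nat)^2 \<le> 2^t"
    by (rule power_increasing) (use step.hyps in auto)
  define k where "k = (2::nat)^t - 2"
  have "int k = 2^t - 2"
    using \<open>2^2 \<le> 2^t\<close> by (simp add: k_def of_nat_diff)
  then have "q (2^Suc t - 3) = w3 * q (int k - 1)^2"
    using conjunct2[OF q_double[of k]] by (simp add: add.commute)
  also have "int k - 1 = 2^t - 3"
    using \<open>int k = 2^t - 2\<close> by simp
  finally show ?case
    using step.IH by simp
qed

theorem mainTheorem12:
  fixes t n :: nat and d j :: int
  assumes "t \<ge> 2"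
    and "d = 2 ^ t - 1"
    and "int n \<ge> d"
    and "j = int n - d"
  shows "r (j - 1) * q (int n) + w3 * r (j - 2) * q (int n - 1) + r j * q (int n - 2) = 0"
proof -
  have "(2::int)^2 \<le> 2^t"
    by (rule power_increasing) (use assms(1) in auto)
  then have "j = int (nat j)" and "int n - int (nat j) \<ge> 1"
    using assms by simp_all
  then have "r (j - 1) * q (int n) + w3 * r (j - 2) * q (int n - 1) + r j * q (int n - 2)
           = w3^nat j * q (int n - j - 2)"
    by (metis r_q_combination_eq)
  also have "int n - j - 2 = 2^t - 3"
    using assms by simp
  finally show ?thesis
    using q_two_power_minus_three[OF assms(1)] by simp
qed

end
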